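(* Let $k\ge3$ and $l\ge1$ be integers, and $G_{k,l}(T):=1-T+T^{lk+1}-T^{k(l+1)}$. If $\alpha\in\mathbb{C}$ satisfies $|\alpha|=1$ and $G_{k,l}(\alpha)=0$, then $\alpha^k=1$ or $\alpha^{k-2}=1$. *)

theory Defs
  imports Complex_Main
begin

definition G :: "nat \<Rightarrow> nat \<Rightarrow> complex \<Rightarrow> complex" where
  "G k l T = 1 - T + T ^ (l * k + 1) - T ^ (k * (l + 1))"

end

theory Submission
  imports Defs
begin

text \<open>A root \<open>\<alpha>\<close> of \<open>G k l\<close> satisfies \<open>1 - \<alpha> = \<alpha> ^ (l * k + 1) * (\<alpha> ^ (k - 1) - 1)\<close>, so on the
  unit circle \<open>\<alpha>\<close> and \<open>\<alpha> ^ (k - 1)\<close> are equally far from \<open>1\<close>. Two unit complex numbers at the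
  same distance from \<open>1\<close> have the same real part, hence are equal or conjugate, i.e. mutually
  inverse. So \<open>\<alpha> ^ (k - 1) = \<alpha>\<close> or \<open>\<alpha> ^ (k - 1) = \<alpha>\<inverse>\<close>. The argument only needs \<open>k \<ge> 2\<close>.\<close>

lemma norm_one_minus_squared_unit:
  fixes z :: complex
  assumes "norm z = 1"
  shows "(norm (1 - z))\<^sup>2 = 2 - 2 * Re z"
  using assms cmod_power2[of z] cmod_power2[of "1 - z"]
  by (simp add: power2_eq_square algebra_simps)

lemma unit_eq_or_inverse_if_norm_one_minus_eq:
  fixes z w :: complex
  assumes z: "norm z = 1" and w: "norm w = 1"
    and dist_eq: "norm (1 - z) = norm (1 - w)"
  shows "w = z \<or> z * w = 1"
proof -
  have "Re z = Re w"
    using dist_eq norm_one_minus_squared_unit[OF z] norm_one_minus_squared_unit[OF w] by simp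
  then have "z + cnj z = w + cnj w"
    by (simp add: complex_add_cnj)
  then have "z * w * (z + cnj z) = z * w * (w + cnj w)"
    by simp
  moreover have "z * cnj z = 1" "w * cnj w = 1"
    using z w by (simp_all flip: complex_norm_square)
  ultimately have "(w - z) * (z * w - 1) = 0"
    by algebra
  then show ?thesis
    by simp
qed

lemma G_eq_factored:
  assumes "k \<ge> 1"
  shows "G k l T = (1 - T) - T ^ (l * k + 1) * (T ^ (k - 1) - 1)"
proof -
  have "k * (l + 1) = (l * k + 1) + (k - 1)"
    using assms by (simp add: algebra_simps)
  then have "T ^ (k * (l + 1)) = T ^ (l * k + 1) * T ^ (k - 1)"
    by (metis power_add)
  then show ?thesis
    unfolding G_def by (simp add: algebra_simps)
qed

theorem lemma14:
  fixes k l :: nat and \<alpha> :: complex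
  assumes "k \<ge> 3" and "l \<ge> 1"
    and "norm \<alpha> = 1" and "G k l \<alpha> = 0"
  shows "\<alpha> ^ k = 1 \<or> \<alpha> ^ (k - 2) = 1"
proof -
  have "1 - \<alpha> = \<alpha> ^ (l * k + 1) * (\<alpha> ^ (k - 1) - 1)"
    using assms(1,4) G_eq_factored[of k l \<alpha>] by (simp add: algebra_simps)
  then have "norm (1 - \<alpha>) = norm (1 - \<alpha> ^ (k - 1))"
    using assms(3) by (simp add: norm_mult norm_power norm_minus_commute)
  then have "\<alpha> ^ (k - 1) = \<alpha> \<or> \<alpha> * \<alpha> ^ (k - 1) = 1"
    using unit_eq_or_inverse_if_norm_one_minus_eq[of \<alpha> "\<alpha> ^ (k - 1)"] assms(3)
    by (simp add: norm_power)
  moreover have "k = Suc (Suc (k - 2))"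
    using assms(1) by simp
  moreover have "\<alpha> \<noteq> 0"
    using assms(3) by auto
  ultimately show ?thesis
    by (metis diff_Suc_1 mult_cancel_left1 power_Suc)
qed

end
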